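(* Let $L\subset\mathbb{Z}^m$ be a non-zero lattice with $L\cap\mathbb{N}^m=\{\mathbf 0\}$ and $\mathrm{Sat}(L)=\ker_{\mathbb{Z}}(\mathcal{A})$. If $\mathrm{rad}(I_L)=\mathrm{rad}(F_1,\ldots,F_s)$ for some $\mathcal{A}$-homogeneous polynomials $F_1,\ldots,F_s\in I_L$, then $\bigcup_{i=1}^s\Gamma_L(F_i)$ is a spanning subcomplex of $\Gamma_L$, and each $\Gamma_L(F_i)$ is a simplex of $\Gamma_L$.
   Context: $K$ is a field, $\mathbf x^{\mathbf u}=x_1^{u_1}\cdots x_m^{u_m}$, $\mathbf u_\pm$ the positive/negative parts of $\mathbf u$, $I_L=(\mathbf x^{\mathbf u_+}-\mathbf x^{\mathbf u_-}:\mathbf u\in L)\subset K[x_1,\ldots,x_m]$, $\mathrm{Sat}(L)=\{\mathbf u:d\mathbf u\in L\text{ for some nonzero }d\in\mathbb{Z}\}$, $\mathcal{A}=\{\mathbf a_1,\ldots,\mathbf a_m\}\subset\mathbb{Z}^n$, $\ker_{\mathbb{Z}}(\mathcal{A})=\{\mathbf q:\sum q_i\mathbf a_i=0\}$. The $\mathcal{A}$-degree of $\mathbf x^{\mathbf u}$ is $\sum u_i\mathbf a_i$; a polynomial is $\mathcal{A}$-homogeneous if all its monomials have equal $\mathcal{A}$-degree. A monomial $M$ is indispensable of $I_L$ if every system of binomial generators contains a binomial having $M$ as a monomial. $\mathcal{T}_{\min}$: inclusion-minimal supports of indispensable monomials ($\mathrm{supp}(\mathbf x^{\mathbf w})=\{i:w_i\ne0\}$).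 $\Gamma_L$: simplicial complex on $\mathcal{T}_{\min}$, with $\{E_1,\ldots,E_k\}$ a face iff there are monomials $M_i$, $\mathrm{supp}(M_i)=E_i$, of equal $\mathcal{A}$-degree. $\Gamma_L(F)$: induced subcomplex on those $E\in\mathcal{T}_{\min}$ equal to the support of some monomial occurring in $F$. Spanning subcomplex: one with the same vertex set as $\Gamma_L$. *)

theory Defs
  imports Main "HOL-Library.Poly_Mapping"
begin

text \<open>Variables x_i are indexed by a finite type 'n (so m = CARD('n)); the ambient
  space Z^n of the configuration A is indexed by a finite type 'd.
  A monomial x^w is identified with its exponent vector w (a finitely supported map 'n to nat);
  a polynomial over K is a finitely supported map from exponents to K.\<close>

type_synonym ('n, 'k) mpoly = "('n \<Rightarrow>\<^sub>0 nat) \<Rightarrow>\<^sub>0 'k"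

definition mono :: "('n \<Rightarrow>\<^sub>0 nat) \<Rightarrow> ('n, 'k::comm_ring_1) mpoly" where
  "mono w = Poly_Mapping.single w 1"

definition posp :: "('n::finite \<Rightarrow> int) \<Rightarrow> ('n \<Rightarrow>\<^sub>0 nat)" where
  "posp u = Abs_poly_mapping (\<lambda>i. nat (u i))"

definition negp :: "('n::finite \<Rightarrow> int) \<Rightarrow> ('n \<Rightarrow>\<^sub>0 nat)" where
  "negp u = Abs_poly_mapping (\<lambda>i. nat (- u i))"

definition is_lattice :: "('n \<Rightarrow> int) set \<Rightarrow> bool" where
  "is_lattice L \<longleftrightarrow> (\<lambda>_. 0) \<in> L \<and> (\<forall>u\<in>L. \<forall>v\<in>L. (\<lambda>i. u i - v i) \<in> L)"

definition Sat :: "('n \<Rightarrow> int) set \<Rightarrow> ('n \<Rightarrow> int) set" where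
  "Sat L = {u. \<exists>d::int. d \<noteq> 0 \<and> (\<lambda>i. d * u i) \<in> L}"

definition kerA :: "('n::finite \<Rightarrow> 'd \<Rightarrow> int) \<Rightarrow> ('n \<Rightarrow> int) set" where
  "kerA a = {q. (\<lambda>j. \<Sum>i\<in>UNIV. q i * a i j) = (\<lambda>_. 0)}"

definition gen_ideal :: "'r::comm_ring_1 set \<Rightarrow> 'r set" where
  "gen_ideal S = {f. \<exists>T c. finite T \<and> T \<subseteq> S \<and> f = (\<Sum>t\<in>T. c t * t)}"

definition rad :: "'r::comm_ring_1 set \<Rightarrow> 'r set" where
  "rad I = {f. \<exists>n. f ^ n \<in> I}"

definition lattice_ideal :: "('n::finite \<Rightarrow> int) set \<Rightarrow> ('n, 'k::comm_ring_1) mpoly set" where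
  "lattice_ideal L = gen_ideal {mono (posp u) - mono (negp u) | u. u \<in> L}"

definition Adeg :: "('n::finite \<Rightarrow> 'd \<Rightarrow> int) \<Rightarrow> ('n \<Rightarrow>\<^sub>0 nat) \<Rightarrow> ('d \<Rightarrow> int)" where
  "Adeg a w = (\<lambda>j. \<Sum>i\<in>UNIV. int (Poly_Mapping.lookup w i) * a i j)"

definition A_homogeneous :: "('n::finite \<Rightarrow> 'd \<Rightarrow> int) \<Rightarrow> ('n, 'k::comm_ring_1) mpoly \<Rightarrow> bool" where
  "A_homogeneous a F \<longleftrightarrow> (\<forall>u\<in>Poly_Mapping.keys F. \<forall>v\<in>Poly_Mapping.keys F. Adeg a u = Adeg a v)"

definition is_binomial :: "('n, 'k::comm_ring_1) mpoly \<Rightarrow> bool" where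
  "is_binomial f \<longleftrightarrow> (\<exists>u v. u \<noteq> v \<and> f = mono u - mono v)"

definition indispensable_monomial ::
  "('n, 'k::comm_ring_1) mpoly set \<Rightarrow> ('n \<Rightarrow>\<^sub>0 nat) \<Rightarrow> bool" where
  "indispensable_monomial I w \<longleftrightarrow>
     (\<forall>G. (\<forall>g\<in>G. is_binomial g) \<and> gen_ideal G = I \<longrightarrow> (\<exists>g\<in>G. w \<in> Poly_Mapping.keys g))"

definition Tmin :: "('n, 'k::comm_ring_1) mpoly set \<Rightarrow> 'n set set" where
  "Tmin I = {E. (\<exists>w. indispensable_monomial I w \<and> Poly_Mapping.keys w = E) \<and>
               \<not> (\<exists>w'. indispensable_monomial I w' \<and> Poly_Mapping.keys w' \<subset> E)}"

text \<open>The simplicial complex Gamma_L, as its set of faces (each a set of vertices).\<close>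
definition Gamma :: "('n::finite \<Rightarrow> 'd \<Rightarrow> int) \<Rightarrow> ('n \<Rightarrow> int) set \<Rightarrow> 'k::comm_ring_1 itself \<Rightarrow> 'n set set set" where
  "Gamma a L _ = {S. S \<subseteq> Tmin (lattice_ideal L :: ('n, 'k) mpoly set) \<and>
       (\<exists>M d. \<forall>E\<in>S. Poly_Mapping.keys (M E) = E \<and> Adeg a (M E) = d)}"

definition vert_of :: "('n::finite \<Rightarrow> int) set \<Rightarrow> ('n, 'k::comm_ring_1) mpoly \<Rightarrow> 'n set set" where
  "vert_of L F = {E \<in> Tmin (lattice_ideal L :: ('n, 'k) mpoly set). \<exists>w\<in>Poly_Mapping.keys F. Poly_Mapping.keys w = E}"

definition Gamma_F :: "('n::finite \<Rightarrow> 'd \<Rightarrow> int) \<Rightarrow> ('n \<Rightarrow> int) set \<Rightarrow> ('n, 'k::comm_ring_1) mpoly \<Rightarrow> 'n set set set" where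
  "Gamma_F a L F = {S \<in> Gamma a L TYPE('k). S \<subseteq> vert_of L F}"

end

theory Submission
  imports Defs
begin

text \<open>Every monomial occurring in an element of \<open>I\<^sub>L\<close> is divisible by some \<open>x\<^sup>u\<^sup>+\<close> with
  \<open>0 \<noteq> u \<in> L\<close>, and a monomial \<open>x\<^sup>u\<^sup>+\<close> that is minimal for divisibility among these is
  indispensable. Now let \<open>E \<in> \<T>\<^sub>m\<^sub>i\<^sub>n\<close> be the support of the indispensable monomial \<open>x\<^sup>u\<^sup>+\<close>.
  Sending a monomial to 1 if its support lies in \<open>E\<close> and to 0 otherwise is a multiplicative
  character of the monoid of monomials, hence induces a ring homomorphism \<open>K[x] \<rightarrow> K\<close>. As
  \<open>L \<inter> \<nat>\<^sup>m = {0}\<close>, the support of \<open>u\<^sub>-\<close> is nonempty and disjoint from \<open>E\<close>, so the binomial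
  \<open>x\<^sup>u\<^sup>+ - x\<^sup>u\<^sup>-\<close> maps to 1. Some power of it lies in \<open>(F\<^sub>1, \<dots>, F\<^sub>s)\<close>, so some \<open>F\<^sub>i\<close> does not
  vanish: it has a monomial supported in \<open>E\<close>. That monomial is divisible by an indispensable
  monomial, so minimality of \<open>E\<close> forces its support to be exactly \<open>E\<close>. Finally the
  monomials of an \<open>\<A>\<close>-homogeneous \<open>F\<^sub>i\<close> share one \<open>\<A>\<close>-degree, so \<open>\<Gamma>\<^sub>L(F\<^sub>i)\<close> is a simplex.\<close>

definition monoid_character :: "('a::monoid_add \<Rightarrow> 'k::monoid_mult) \<Rightarrow> bool" where
  "monoid_character \<chi> \<longleftrightarrow> \<chi> 0 = 1 \<and> (\<forall>x y. \<chi> (x + y) = \<chi> x * \<chi> y)"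

definition char_eval :: "('a \<Rightarrow> 'k) \<Rightarrow> ('a \<Rightarrow>\<^sub>0 'k) \<Rightarrow> 'k::comm_ring_1" where
  "char_eval \<chi> f = (\<Sum>k\<in>Poly_Mapping.keys f. Poly_Mapping.lookup f k * \<chi> k)"

lemma char_eval_zero [simp]: "char_eval \<chi> 0 = 0"
  by (simp add: char_eval_def)

lemma char_eval_single [simp]: "char_eval \<chi> (Poly_Mapping.single k c) = c * \<chi> k"
  by (simp add: char_eval_def)

lemma char_eval_add: "char_eval \<chi> (f + g) = char_eval \<chi> f + char_eval \<chi> g"
  unfolding char_eval_def
  by (rule setsum_keys_plus_distrib[where f = "\<lambda>k c. c * \<chi> k"]) (auto simp: distrib_right)

lemma char_eval_diff: "char_eval \<chi> (f - g) = char_eval \<chi> f - char_eval \<chi> g"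
proof -
  have "char_eval \<chi> (f - g) + char_eval \<chi> g = char_eval \<chi> f"
    by (simp flip: char_eval_add)
  then show ?thesis
    by (simp add: eq_diff_eq)
qed

lemma char_eval_sum: "char_eval \<chi> (\<Sum>t\<in>T. f t) = (\<Sum>t\<in>T. char_eval \<chi> (f t))"
  by (induction T rule: infinite_finite_induct) (simp_all add: char_eval_add)

lemma update_eq_single_add:
  "a \<notin> Poly_Mapping.keys f \<Longrightarrow> Poly_Mapping.update a b f = Poly_Mapping.single a b + f"
  by (intro poly_mapping_eqI) (auto simp: lookup_update lookup_add lookup_single in_keys_iff when_def)

lemma char_eval_single_mult:
  assumes "monoid_character \<chi>"
  shows "char_eval \<chi> (Poly_Mapping.single a b * g) = b * \<chi> a * char_eval \<chi> g"
proof (induction g rule: update_induct)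
  case (update g c d)
  have "char_eval \<chi> (Poly_Mapping.single a b * Poly_Mapping.update c d g)
      = char_eval \<chi> (Poly_Mapping.single (a + c) (b * d) + Poly_Mapping.single a b * g)"
    by (simp only: update_eq_single_add[OF update(1)] distrib_left mult_single)
  also have "\<dots> = b * \<chi> a * (d * \<chi> c + char_eval \<chi> g)"
    using assms update(3) by (simp add: char_eval_add monoid_character_def algebra_simps)
  also have "\<dots> = b * \<chi> a * char_eval \<chi> (Poly_Mapping.update c d g)"
    by (simp add: update_eq_single_add[OF update(1)] char_eval_add)
  finally show ?case .
qed simp

lemma char_eval_mult:
  assumes "monoid_character \<chi>"
  shows "char_eval \<chi> (f * g) = char_eval \<chi> f * char_eval \<chi> g"
proof (induction f rule: update_induct)
  case (update f c d)
  then show ?case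
    by (simp add: update_eq_single_add distrib_right char_eval_add
        char_eval_single_mult[OF assms] algebra_simps)
qed simp

lemma char_eval_power:
  assumes "monoid_character \<chi>"
  shows "char_eval \<chi> (f ^ n) = char_eval \<chi> f ^ n"
proof (induction n)
  case 0
  have "char_eval \<chi> (Poly_Mapping.single 0 1) = 1"
    using assms by (simp only: char_eval_single) (simp add: monoid_character_def)
  then show ?case
    by simp
next
  case (Suc n)
  then show ?case
    by (simp add: char_eval_mult[OF assms])
qed

lemma char_eval_gen_ideal:
  assumes "monoid_character \<chi>" and "\<forall>s\<in>S. char_eval \<chi> s = 0" and "f \<in> gen_ideal S"
  shows "char_eval \<chi> f = 0"
proof -
  obtain T c where T: "T \<subseteq> S" "f = (\<Sum>t\<in>T. c t * t)"
    using assms(3) unfolding gen_ideal_def by blast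
  have "char_eval \<chi> f = (\<Sum>t\<in>T. char_eval \<chi> (c t) * char_eval \<chi> t)"
    by (simp add: T(2) char_eval_sum char_eval_mult[OF assms(1)])
  also have "\<dots> = 0"
    using T(1) assms(2) by (intro sum.neutral) auto
  finally show ?thesis .
qed

lemma keys_gen_ideal:
  assumes "f \<in> gen_ideal S" and "w \<in> Poly_Mapping.keys f"
  shows "\<exists>s\<in>S. \<exists>a b. b \<in> Poly_Mapping.keys s \<and> w = a + b"
proof -
  obtain T c where T: "T \<subseteq> S" "f = (\<Sum>t\<in>T. c t * t)"
    using assms(1) unfolding gen_ideal_def by blast
  then obtain t where t: "t \<in> T" "w \<in> Poly_Mapping.keys (c t * t)"
    using keys_sum[of "\<lambda>t. c t * t" T] assms(2) by blast
  then obtain a b where "w = a + b" "b \<in> Poly_Mapping.keys t"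
    using keys_mult[of "c t" t] by blast
  then show ?thesis
    using t(1) T(1) by blast
qed

lemma gen_ideal_mem: "s \<in> S \<Longrightarrow> s \<in> gen_ideal S"
  unfolding gen_ideal_def by (intro CollectI exI[of _ "{s}"] exI[of _ "\<lambda>_. 1"]) simp

lemma gen_ideal_Diff_zero: "gen_ideal (S - {0}) = gen_ideal S"
proof
  show "gen_ideal S \<subseteq> gen_ideal (S - {0})"
  proof
    fix f assume "f \<in> gen_ideal S"
    then obtain T c where T: "finite T" "T \<subseteq> S" "f = (\<Sum>t\<in>T. c t * t)"
      unfolding gen_ideal_def by blast
    then have "f = (\<Sum>t\<in>T - {0}. c t * t)"
      by (cases "0 \<in> T") (simp_all add: sum.remove)
    with T show "f \<in> gen_ideal (S - {0})"
      unfolding gen_ideal_def by blast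
  qed
qed (auto simp: gen_ideal_def)

lemma lookup_posp [simp]: "Poly_Mapping.lookup (posp u) i = nat (u i)"
  by (simp add: posp_def)

lemma lookup_negp [simp]: "Poly_Mapping.lookup (negp u) i = nat (- u i)"
  by (simp add: negp_def)

lemma negp_eq_posp_uminus: "negp u = posp (\<lambda>i. - u i)"
  by (intro poly_mapping_eqI) simp

lemma posp_eq_negp_iff: "posp u = negp u \<longleftrightarrow> u = (\<lambda>_. 0)"
proof
  assume "posp u = negp u"
  then have nat_eq: "nat (u i) = nat (- u i)" for i
    by (metis lookup_posp lookup_negp)
  have "u i = 0" for i
    using nat_eq[of i] by arith
  then show "u = (\<lambda>_. 0)"
    by blast
qed (intro poly_mapping_eqI, simp)

lemma negp_eq_zero_iff: "negp u = 0 \<longleftrightarrow> (\<forall>i. u i \<ge> 0)"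
  by (auto simp: poly_mapping_eq_iff fun_eq_iff)

lemma keys_posp_negp_disjoint: "Poly_Mapping.keys (posp u) \<inter> Poly_Mapping.keys (negp u) = {}"
  by (auto simp: in_keys_iff)

lemma lattice_uminus:
  assumes "is_lattice L" and "u \<in> L"
  shows "(\<lambda>i. - u i) \<in> L"
proof -
  have "(\<lambda>_. 0) \<in> L" and closed: "\<forall>u\<in>L. \<forall>v\<in>L. (\<lambda>i. u i - v i) \<in> L"
    using assms(1) unfolding is_lattice_def by auto
  then show ?thesis
    using bspec[OF bspec[OF closed \<open>(\<lambda>_. 0) \<in> L\<close>] assms(2)] by simp
qed

lemma keys_add_nat:
  "Poly_Mapping.keys ((x::'a \<Rightarrow>\<^sub>0 nat) + y) = Poly_Mapping.keys x \<union> Poly_Mapping.keys y"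
  by (auto simp: in_keys_iff lookup_add)

definition posp_multiples :: "('n::finite \<Rightarrow> int) set \<Rightarrow> ('n \<Rightarrow>\<^sub>0 nat) set" where
  "posp_multiples L = {m. \<exists>u\<in>L. u \<noteq> (\<lambda>_. 0) \<and> (\<exists>c. m = posp u + c)}"

lemma posp_in_posp_multiples: "u \<in> L \<Longrightarrow> u \<noteq> (\<lambda>_. 0) \<Longrightarrow> posp u \<in> posp_multiples L"
  unfolding posp_multiples_def by (intro CollectI bexI[of _ u] conjI exI[of _ 0]) simp_all

lemma posp_multiples_add:
  assumes "m \<in> posp_multiples L"
  shows "a + m \<in> posp_multiples L"
proof -
  obtain u c where "u \<in> L" "u \<noteq> (\<lambda>_. 0)" "m = posp u + c"
    using assms unfolding posp_multiples_def by blast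
  moreover have "a + (posp u + c) = posp u + (a + c)"
    by (simp add: ac_simps)
  ultimately show ?thesis
    unfolding posp_multiples_def by blast
qed

lemma keys_lattice_binomial:
  assumes "w \<in> Poly_Mapping.keys (mono (posp u) - mono (negp u) :: ('n::finite, 'k::comm_ring_1) mpoly)"
  shows "u \<noteq> (\<lambda>_. 0)" and "w = posp u \<or> w = posp (\<lambda>i. - u i)"
proof -
  show "u \<noteq> (\<lambda>_. 0)"
  proof
    assume "u = (\<lambda>_. 0)"
    then have "posp u = negp u"
      using posp_eq_negp_iff by blast
    with assms show False
      by simp
  qed
  have "w \<in> {posp u, negp u}"
    using assms by (auto simp: in_keys_iff lookup_minus lookup_single when_def mono_def
        split: if_splits)
  then show "w = posp u \<or> w = posp (\<lambda>i. - u i)"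
    by (simp add: negp_eq_posp_uminus)
qed

lemma keys_lattice_ideal:
  assumes lat: "is_lattice L" and f: "f \<in> (lattice_ideal L :: ('n::finite, 'k::comm_ring_1) mpoly set)"
  shows "Poly_Mapping.keys f \<subseteq> posp_multiples L"
proof
  fix w assume "w \<in> Poly_Mapping.keys f"
  then have "\<exists>g\<in>{mono (posp u) - mono (negp u) :: ('n, 'k) mpoly | u. u \<in> L}.
      \<exists>a b. b \<in> Poly_Mapping.keys g \<and> w = a + b"
    using keys_gen_ideal f unfolding lattice_ideal_def by blast
  then obtain u a b where u: "u \<in> L" and w: "w = a + b"
    and b: "b \<in> Poly_Mapping.keys (mono (posp u) - mono (negp u) :: ('n, 'k) mpoly)"
    by blast
  have nonzero: "u \<noteq> (\<lambda>_. 0)" "(\<lambda>i. - u i) \<noteq> (\<lambda>_. 0)"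
    using keys_lattice_binomial(1)[OF b] by (simp_all add: fun_eq_iff)
  have "b \<in> posp_multiples L"
    using keys_lattice_binomial(2)[OF b] posp_in_posp_multiples[OF u nonzero(1)]
      posp_in_posp_multiples[OF lattice_uminus[OF lat u] nonzero(2)] by blast
  then show "w \<in> posp_multiples L"
    unfolding w by (rule posp_multiples_add)
qed

lemma lookup_posp_binomial:
  "u \<noteq> (\<lambda>_. 0) \<Longrightarrow>
    Poly_Mapping.lookup (mono (posp u) - mono (negp u) :: ('n::finite, 'k::comm_ring_1) mpoly) (posp u) = 1"
  using posp_eq_negp_iff[of u] by (simp add: mono_def lookup_minus lookup_single)

lemma binomial_in_lattice_ideal:
  "u \<in> L \<Longrightarrow> mono (posp u) - mono (negp u) \<in> (lattice_ideal L :: ('n::finite, 'k::comm_ring_1) mpoly set)"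
  unfolding lattice_ideal_def by (rule gen_ideal_mem) blast

lemma indispensable_posp_if_minimal:
  assumes lat: "is_lattice L" and v: "v \<in> L" "v \<noteq> (\<lambda>_. 0)"
    and minimal: "\<forall>m\<in>posp_multiples L. \<forall>c. posp v = m + c \<longrightarrow> c = 0"
  shows "indispensable_monomial (lattice_ideal L :: ('n::finite, 'k::comm_ring_1) mpoly set) (posp v)"
  unfolding indispensable_monomial_def
proof (intro allI impI)
  fix G :: "('n, 'k) mpoly set"
  assume "(\<forall>g\<in>G. is_binomial g) \<and> gen_ideal G = lattice_ideal L"
  then have G: "gen_ideal G = lattice_ideal L" by blast
  have "Poly_Mapping.lookup (mono (posp v) - mono (negp v) :: ('n, 'k) mpoly) (posp v) = 1"
    by (rule lookup_posp_binomial[OF v(2)])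
  then have "posp v \<in> Poly_Mapping.keys (mono (posp v) - mono (negp v) :: ('n, 'k) mpoly)"
    by (simp add: in_keys_iff)
  then obtain g a b where g: "g \<in> G" "b \<in> Poly_Mapping.keys g" "posp v = a + b"
    using keys_gen_ideal binomial_in_lattice_ideal[OF v(1)] G by metis
  have "g \<in> lattice_ideal L"
    using G g(1) gen_ideal_mem by blast
  then have "b \<in> posp_multiples L"
    using keys_lattice_ideal[OF lat] g(2) by blast
  then have "a = 0"
    using minimal g(3) by (simp add: add.commute)
  then show "\<exists>g\<in>G. posp v \<in> Poly_Mapping.keys g"
    using g by auto
qed

definition monomial_degree :: "('n::finite \<Rightarrow>\<^sub>0 nat) \<Rightarrow> nat" where
  "monomial_degree w = (\<Sum>i\<in>UNIV. Poly_Mapping.lookup w i)"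

lemma monomial_degree_add: "monomial_degree (x + y) = monomial_degree x + monomial_degree y"
  by (simp add: monomial_degree_def lookup_add sum.distrib)

lemma monomial_degree_eq_0_iff: "monomial_degree x = 0 \<longleftrightarrow> x = 0"
  by (auto simp: monomial_degree_def poly_mapping_eq_iff fun_eq_iff)

lemma indispensable_dvd_posp:
  assumes lat: "is_lattice L" and u: "u \<in> L" "u \<noteq> (\<lambda>_. 0)"
  obtains w c where "indispensable_monomial (lattice_ideal L :: ('n::finite, 'k::comm_ring_1) mpoly set) w"
    and "posp u = w + c"
proof -
  define D where "D = {m \<in> posp_multiples L. \<exists>c. posp u = m + c}"
  have "posp u \<in> D"
    unfolding D_def using posp_in_posp_multiples[OF u] by (intro CollectI conjI exI[of _ 0]) simp_all
  then obtain m where m: "m \<in> D"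
    and least: "\<And>m'. m' \<in> D \<Longrightarrow> monomial_degree m \<le> monomial_degree m'"
    using ex_has_least_nat[of "\<lambda>m. m \<in> D" "posp u" monomial_degree] by blast
  then obtain v c0 c where v: "v \<in> L" "v \<noteq> (\<lambda>_. 0)" "m = posp v + c0"
    and c: "posp u = m + c"
    unfolding D_def posp_multiples_def by blast
  have "posp u = posp v + (c0 + c)"
    using c v(3) by (simp add: ac_simps)
  then have "posp v \<in> D"
    unfolding D_def using posp_in_posp_multiples[OF v(1,2)] by blast
  then have "c0 = 0"
    using least[of "posp v"] v(3) by (simp add: monomial_degree_add monomial_degree_eq_0_iff)
  have "\<forall>m'\<in>posp_multiples L. \<forall>c'. posp v = m' + c' \<longrightarrow> c' = 0"
  proof (intro ballI allI impI)
    fix m' c' assume m': "m' \<in> posp_multiples L" and v_eq: "posp v = m' + c'"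
    have "posp u = m' + (c' + c)"
      using c v(3) v_eq \<open>c0 = 0\<close> by (simp add: ac_simps)
    then have "m' \<in> D"
      unfolding D_def using m' by blast
    then have "monomial_degree (m' + c') \<le> monomial_degree m'"
      using least v(3) v_eq \<open>c0 = 0\<close> by simp
    then show "c' = 0"
      by (simp add: monomial_degree_add monomial_degree_eq_0_iff)
  qed
  then have "indispensable_monomial (lattice_ideal L :: ('n, 'k) mpoly set) (posp v)"
    by (rule indispensable_posp_if_minimal[OF lat v(1,2)])
  then show ?thesis
    using that c v(3) \<open>c0 = 0\<close> by simp
qed

lemma indispensable_is_posp:
  assumes lat: "is_lattice L"
    and "indispensable_monomial (lattice_ideal L :: ('n::finite, 'k::comm_ring_1) mpoly set) w"
  obtains u where "u \<in> L" "u \<noteq> (\<lambda>_. 0)" "posp u = w"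
proof -
  define G :: "('n, 'k) mpoly set" where "G = {mono (posp u) - mono (negp u) | u. u \<in> L} - {0}"
  have "\<forall>g\<in>G. is_binomial g"
    unfolding G_def is_binomial_def by auto (metis diff_self)
  moreover have "gen_ideal G = lattice_ideal L"
    by (simp add: G_def gen_ideal_Diff_zero lattice_ideal_def)
  ultimately obtain u where u: "u \<in> L"
    and w: "w \<in> Poly_Mapping.keys (mono (posp u) - mono (negp u) :: ('n, 'k) mpoly)"
    using assms(2) unfolding indispensable_monomial_def G_def by blast
  have nonzero: "u \<noteq> (\<lambda>_. 0)" "(\<lambda>i. - u i) \<noteq> (\<lambda>_. 0)"
    using keys_lattice_binomial(1)[OF w] by (simp_all add: fun_eq_iff)
  show ?thesis
    using keys_lattice_binomial(2)[OF w] that[OF u nonzero(1)]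
      that[OF lattice_uminus[OF lat u] nonzero(2)] by blast
qed

definition support_indicator :: "'n set \<Rightarrow> ('n \<Rightarrow>\<^sub>0 nat) \<Rightarrow> 'k::comm_ring_1" where
  "support_indicator E w = (if Poly_Mapping.keys w \<subseteq> E then 1 else 0)"

lemma monoid_character_support_indicator: "monoid_character (support_indicator E)"
  by (simp add: monoid_character_def support_indicator_def keys_add_nat)

lemma char_eval_support_indicator_nonzero:
  assumes "char_eval (support_indicator E) f \<noteq> 0"
  shows "\<exists>w\<in>Poly_Mapping.keys f. Poly_Mapping.keys w \<subseteq> E"
proof -
  obtain w where "w \<in> Poly_Mapping.keys f" "Poly_Mapping.lookup f w * support_indicator E w \<noteq> 0"
    using assms unfolding char_eval_def by (meson sum.not_neutral_contains_not_neutral)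
  then show ?thesis
    by (auto simp: support_indicator_def split: if_splits)
qed

lemma subset_rad: "I \<subseteq> rad I"
  unfolding rad_def by (auto intro: exI[of _ 1])

lemma radical_generator_monomial_supported_in_posp:
  fixes S :: "('n::finite, 'k::comm_ring_1) mpoly set"
  assumes pointed: "\<forall>u\<in>L. (\<forall>i. u i \<ge> 0) \<longrightarrow> u = (\<lambda>_. 0)"
    and rad: "lattice_ideal L \<subseteq> rad (gen_ideal S)"
    and u: "u \<in> L" "u \<noteq> (\<lambda>_. 0)"
  shows "\<exists>f\<in>S. \<exists>w\<in>Poly_Mapping.keys f. Poly_Mapping.keys w \<subseteq> Poly_Mapping.keys (posp u)"
proof -
  define \<chi> :: "('n \<Rightarrow>\<^sub>0 nat) \<Rightarrow> 'k" where "\<chi> = support_indicator (Poly_Mapping.keys (posp u))"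
  define h :: "('n, 'k) mpoly" where "h = mono (posp u) - mono (negp u)"
  have "negp u \<noteq> 0"
    using pointed u negp_eq_zero_iff by blast
  then have "Poly_Mapping.keys (negp u) \<noteq> {}"
    by simp
  then have "\<not> Poly_Mapping.keys (negp u) \<subseteq> Poly_Mapping.keys (posp u)"
    using keys_posp_negp_disjoint[of u] by blast
  then have "char_eval \<chi> h = 1"
    by (simp add: \<chi>_def h_def mono_def char_eval_diff support_indicator_def)
  moreover obtain n where "h ^ n \<in> gen_ideal S"
    using rad binomial_in_lattice_ideal[OF u(1)] unfolding h_def rad_def by blast
  ultimately have "\<not> (\<forall>f\<in>S. char_eval \<chi> f = 0)"
    using char_eval_gen_ideal char_eval_power monoid_character_support_indicator
    unfolding \<chi>_def by (metis one_neq_zero power_one)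
  then show ?thesis
    using char_eval_support_indicator_nonzero unfolding \<chi>_def by blast
qed

lemma keys_eq_Tmin_if_subset:
  assumes lat: "is_lattice L"
    and E: "E \<in> Tmin (lattice_ideal L :: ('n::finite, 'k::comm_ring_1) mpoly set)"
    and f: "f \<in> lattice_ideal L" "w \<in> Poly_Mapping.keys f" and sub: "Poly_Mapping.keys w \<subseteq> E"
  shows "Poly_Mapping.keys w = E"
proof -
  obtain v c where v: "v \<in> L" "v \<noteq> (\<lambda>_. 0)" "w = posp v + c"
    using keys_lattice_ideal[OF lat f(1)] f(2) unfolding posp_multiples_def by blast
  obtain w' c' where w': "indispensable_monomial (lattice_ideal L :: ('n, 'k) mpoly set) w'"
    "posp v = w' + c'"
    using indispensable_dvd_posp[OF lat v(1,2)] by blast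
  have "Poly_Mapping.keys w' \<subseteq> Poly_Mapping.keys w"
    using v(3) w'(2) by (auto simp: keys_add_nat)
  with E sub w'(1) show ?thesis
    unfolding Tmin_def by blast
qed

lemma Tmin_in_vert_of_generator:
  fixes S :: "('n::finite, 'k::comm_ring_1) mpoly set"
  assumes lat: "is_lattice L"
    and pointed: "\<forall>u\<in>L. (\<forall>i. u i \<ge> 0) \<longrightarrow> u = (\<lambda>_. 0)"
    and rad: "lattice_ideal L \<subseteq> rad (gen_ideal S)" and S: "S \<subseteq> lattice_ideal L"
    and E: "E \<in> Tmin (lattice_ideal L :: ('n, 'k) mpoly set)"
  shows "\<exists>f\<in>S. E \<in> vert_of L f"
proof -
  obtain w where "indispensable_monomial (lattice_ideal L :: ('n, 'k) mpoly set) w"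
    and E_eq: "Poly_Mapping.keys w = E"
    using E unfolding Tmin_def by blast
  then obtain u where u: "u \<in> L" "u \<noteq> (\<lambda>_. 0)" "posp u = w"
    using indispensable_is_posp[OF lat] by blast
  then obtain f b where "f \<in> S" "b \<in> Poly_Mapping.keys f" "Poly_Mapping.keys b \<subseteq> E"
    using radical_generator_monomial_supported_in_posp[OF pointed rad u(1,2)] E_eq by blast
  moreover have "Poly_Mapping.keys b = E"
    using keys_eq_Tmin_if_subset[OF lat E] calculation S by blast
  ultimately show ?thesis
    using E unfolding vert_of_def by blast
qed

lemma subset_vert_of_in_Gamma:
  fixes F :: "('n::finite, 'k::comm_ring_1) mpoly"
  assumes hom: "A_homogeneous a F" and sub: "S \<subseteq> vert_of L F"
  shows "S \<in> Gamma a L TYPE('k)"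
proof -
  define M where "M E = (SOME w. w \<in> Poly_Mapping.keys F \<and> Poly_Mapping.keys w = E)" for E
  have M: "M E \<in> Poly_Mapping.keys F \<and> Poly_Mapping.keys (M E) = E" if "E \<in> S" for E
    unfolding M_def by (rule someI_ex) (use that sub in \<open>auto simp: vert_of_def\<close>)
  have "\<exists>d. \<forall>E\<in>S. Adeg a (M E) = d"
  proof (cases "S = {}")
    case False
    then obtain E0 where "E0 \<in> S" by blast
    then have "\<forall>E\<in>S. Adeg a (M E) = Adeg a (M E0)"
      using M hom unfolding A_homogeneous_def by blast
    then show ?thesis by blast
  qed simp
  moreover have "S \<subseteq> Tmin (lattice_ideal L :: ('n, 'k) mpoly set)"
    using sub unfolding vert_of_def by blast
  ultimately show ?thesis
    using M unfolding Gamma_def by blast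
qed

lemma Gamma_F_eq_Pow_vert_of:
  "A_homogeneous a F \<Longrightarrow> Gamma_F a L F = Pow (vert_of L F)"
  unfolding Gamma_F_def using subset_vert_of_in_Gamma by blast

theorem corollary2p11:
  fixes L :: "('n::finite \<Rightarrow> int) set"
    and a :: "'n \<Rightarrow> 'd::finite \<Rightarrow> int"
    and F :: "nat \<Rightarrow> ('n, 'k::field) mpoly"
    and s :: nat
  assumes "is_lattice L" and "L \<noteq> {\<lambda>_. 0}"
    and "\<forall>u\<in>L. (\<forall>i. u i \<ge> 0) \<longrightarrow> u = (\<lambda>_. 0)"
    and "Sat L = kerA a"
    and "\<forall>i<s. A_homogeneous a (F i) \<and> F i \<in> lattice_ideal L"
    and "rad (lattice_ideal L) = rad (gen_ideal (F ` {..<s}))"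
  shows "\<Union>(\<Union>i<s. Gamma_F a L (F i)) = Tmin (lattice_ideal L :: ('n, 'k) mpoly set) \<and>
         (\<forall>i<s. \<exists>V\<in>Gamma a L TYPE('k). Gamma_F a L (F i) = Pow V)"
proof -
  have simplex: "Gamma_F a L (F i) = Pow (vert_of L (F i))"
    and face: "vert_of L (F i) \<in> Gamma a L TYPE('k)" if "i < s" for i
    using assms(5) that Gamma_F_eq_Pow_vert_of subset_vert_of_in_Gamma by blast+
  have "lattice_ideal L \<subseteq> rad (gen_ideal (F ` {..<s}))"
    using assms(6) subset_rad by blast
  then have "\<exists>i<s. E \<in> vert_of L (F i)" if "E \<in> Tmin (lattice_ideal L :: ('n, 'k) mpoly set)" for E
    using Tmin_in_vert_of_generator[OF assms(1,3)] assms(5) that by blast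
  moreover have "vert_of L (F i) \<subseteq> Tmin (lattice_ideal L :: ('n, 'k) mpoly set)" for i
    unfolding vert_of_def by blast
  ultimately have "(\<Union>i<s. vert_of L (F i)) = Tmin (lattice_ideal L :: ('n, 'k) mpoly set)"
    by blast
  moreover have "\<Union>(\<Union>i<s. Gamma_F a L (F i)) = (\<Union>i<s. vert_of L (F i))"
    using simplex by auto
  ultimately show ?thesis
    using simplex face by auto
qed

end
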